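(* For every integer $N>0$, \[\mathcal{F}_{(1)}(w_1,\dots,w_N)=\alpha^{N-1}\sum_{k=1}^N\frac{(1-q)^2w_k}{(1-w_k)(1-qw_k)}.\]
   Context: $q>0$, $q\ne1$, $\alpha\ge0$. $\mathcal{B}_N$ is the group of signed permutations of $\{1,\dots,N\}$ acting by $\sigma(f(w_1,\dots,w_N))=f(w_{\sigma(1)},\dots,w_{\sigma(N)})$ with $w_{-k}:=1/(qw_k)$. With $V_k=\frac{q^{\binom{k}{2}}(1-q)^k}{\prod_{i=1}^k(1-q^i)(1+q^{i-1})}$ and $\varphi_1(w)=\frac{1-q-\alpha+\alpha w}{1-qw^2}\frac{(1-q)w}{1-w}$, the function indexed by the one-particle configuration $(1)$ is \[\mathcal{F}_{(1)}(w_1,\dots,w_N)=V_{N-1}\alpha^{N-1}\sum_{\sigma\in\mathcal{B}_N}\sigma\!\left(\prod_{1\le i<j\le N}\left[\frac{w_i-qw_j}{w_i-w_j}\frac{1-w_iw_j}{1-qw_iw_j}\right]\varphi_1(w_1)\right).\] *)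

theory Defs
  imports "HOL-Analysis.Analysis" "HOL-Combinatorics.Permutations"
begin

text \<open>Signed permutations of {1..N}: a pair (p, s) with p a permutation of {1..N}
  and s a sign vector (True = negative sign), supported on {1..N}.
  Such a pair represents sigma(k) = p k if s k = False, and sigma(k) = - p k if s k = True.\<close>
definition signed_perms :: "nat \<Rightarrow> ((nat \<Rightarrow> nat) \<times> (nat \<Rightarrow> bool)) set" where
  "signed_perms N = {(p, s). p permutes {1..N} \<and> (\<forall>k. k \<notin> {1..N} \<longrightarrow> \<not> s k)}"

text \<open>The variable w_{sigma(k)}, with the convention w_{-k} = 1/(q w_k).\<close>
definition signed_var :: "real \<Rightarrow> (nat \<Rightarrow> complex) \<Rightarrow> (nat \<Rightarrow> nat) \<Rightarrow> (nat \<Rightarrow> bool) \<Rightarrow> nat \<Rightarrow> complex" where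
  "signed_var q w p s k = (if s k then 1 / (of_real q * w (p k)) else w (p k))"

definition V_const :: "real \<Rightarrow> nat \<Rightarrow> real" where
  "V_const q k = q ^ (k choose 2) * (1 - q) ^ k /
     (\<Prod>i = 1..k. (1 - q ^ i) * (1 + q ^ (i - 1)))"

definition phi1 :: "real \<Rightarrow> real \<Rightarrow> complex \<Rightarrow> complex" where
  "phi1 q \<alpha> w = (1 - of_real q - of_real \<alpha> + of_real \<alpha> * w) / (1 - of_real q * w ^ 2)
                  * ((1 - of_real q) * w / (1 - w))"

definition F_summand :: "real \<Rightarrow> real \<Rightarrow> nat \<Rightarrow> (nat \<Rightarrow> complex) \<Rightarrow> complex" where
  "F_summand q \<alpha> N z =
     (\<Prod>i\<in>{1..N}. \<Prod>j\<in>{i+1..N}.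
        (z i - of_real q * z j) / (z i - z j) * ((1 - z i * z j) / (1 - of_real q * z i * z j)))
     * phi1 q \<alpha> (z 1)"

definition F1 :: "real \<Rightarrow> real \<Rightarrow> nat \<Rightarrow> (nat \<Rightarrow> complex) \<Rightarrow> complex" where
  "F1 q \<alpha> N w = of_real (V_const q (N - 1) * \<alpha> ^ (N - 1)) *
     (\<Sum>(p, s)\<in>signed_perms N. F_summand q \<alpha> N (signed_var q w p s))"

end

theory Submission
  imports Defs
begin

text \<open>Split the sum over signed permutations according to \<open>\<sigma>(1) = \<plusminus>k\<close>. Since the pair
  factor \<open>f(x, y)\<close> is invariant under \<open>y \<mapsto> 1/(q y)\<close>, the factors pairing \<open>z\<^sub>1\<close> with the
  other variables only depend on \<open>w\<^sub>k\<close>, and what remains is the symmetrization of the constant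
  function in the other \<open>N - 1\<close> variables, which is \<open>1/V\<^sub>N\<^sub>-\<^sub>1\<close> by induction on \<open>N\<close>.
  This leaves a sum of \<open>\<psi>(p) \<Prod>\<^sub>j\<^sub>\<noteq>\<^sub>k f(p, w\<^sub>j)\<close> over the \<open>2N\<close> poles \<open>p \<in> {w\<^sub>k, 1/(q w\<^sub>k)}\<close>
  of \<open>P(x) = \<Prod>\<^sub>j f(x, w\<^sub>j)\<close>, with \<open>\<psi> = \<phi>\<^sub>1\<close> or \<open>\<psi> = 1\<close>. The partial fraction expansion
  \<open>P(x) = q\<^sup>-\<^sup>N + \<Sum>\<^sub>p res\<^sub>p P / (x - p)\<close>, together with a partial fraction expansion of
  \<open>\<psi> / res\<close> in \<open>p\<close>, turns these sums into the values of \<open>P\<close> at \<open>0\<close> and \<open>\<plusminus>1\<close> and its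
  derivative at \<open>1\<close>, all of which are explicit.\<close>

section \<open>The pair factor and its partial fractions\<close>

definition pair_factor :: "'a::field \<Rightarrow> 'a \<Rightarrow> 'a \<Rightarrow> 'a" where
  "pair_factor Q x y = (x - Q * y) / (x - y) * ((1 - x * y) / (1 - Q * x * y))"

text \<open>The residue of \<^term>\<open>\<lambda>x. pair_factor Q x y\<close> at \<open>x = y\<close>; its residue at the other pole
  \<open>x = 1/(Q y)\<close> is \<open>pair_residue Q (1/(Q y))\<close>.\<close>
definition pair_residue :: "'a::field \<Rightarrow> 'a \<Rightarrow> 'a" where
  "pair_residue Q y = y * (1 - Q) * (1 - y\<^sup>2) / (1 - Q * y\<^sup>2)"

definition signed_point :: "'a::field \<Rightarrow> bool \<Rightarrow> 'a \<Rightarrow> 'a" where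
  "signed_point Q e z = (if e then 1 / (Q * z) else z)"

lemma pair_factor_partial_fractions:
  fixes Q x y :: "'a::field"
  assumes "Q \<noteq> 0" "y \<noteq> 0" "Q * y\<^sup>2 \<noteq> 1" "x \<noteq> y" "Q * x * y \<noteq> 1"
  shows "pair_factor Q x y = 1 / Q + (\<Sum>e\<in>UNIV. pair_residue Q (signed_point Q e y) / (x - signed_point Q e y))"
proof -
  have "x - 1 / (Q * y) = (Q * x * y - 1) / (Q * y)" using assms by (simp add: field_simps)
  moreover have "Q * x * y - 1 \<noteq> 0" "x - y \<noteq> 0" "Q * y\<^sup>2 - 1 \<noteq> 0" "1 - Q * x * y \<noteq> 0" "1 - Q * y\<^sup>2 \<noteq> 0"
    using assms by auto
  ultimately show ?thesis using assms
    unfolding pair_factor_def pair_residue_def signed_point_def UNIV_bool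
    by (simp add: divide_simps) (simp add: algebra_simps power2_eq_square)
qed

lemma pair_factor_dual:
  fixes Q x y :: "'a::field"
  assumes "Q \<noteq> 0" "y \<noteq> 0" "x \<noteq> y" "Q * x * y \<noteq> 1"
  shows "pair_factor Q x (1 / (Q * y)) = pair_factor Q x y"
proof -
  have "x - y \<noteq> 0" "y - x \<noteq> 0" "Q * x * y - 1 \<noteq> 0" "1 - Q * x * y \<noteq> 0" using assms by auto
  then show ?thesis using assms unfolding pair_factor_def
    by (simp add: divide_simps) (simp add: algebra_simps)
qed

lemma pair_factor_at_one: "y \<noteq> 1 \<Longrightarrow> Q * y \<noteq> 1 \<Longrightarrow> pair_factor Q 1 y = 1"
  by (simp add: pair_factor_def)

lemma pair_factor_at_zero: "Q \<noteq> 0 \<Longrightarrow> y \<noteq> 0 \<Longrightarrow> pair_factor Q 0 y = Q"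
  by (simp add: pair_factor_def)

lemma pair_factor_at_minus_one:
  fixes Q y :: "'a::field"
  assumes "y \<noteq> -1" "Q * y \<noteq> -1"
  shows "pair_factor Q (-1) y = 1"
proof -
  have "1 + y \<noteq> 0" "1 + Q * y \<noteq> 0"
    using assms by (auto simp: add_eq_0_iff)
  moreover have "(-1 - Q * y) / (-1 - y) = (1 + Q * y) / (1 + y)"
    using minus_divide_divide[of "1 + Q * y" "1 + y"] by simp
  ultimately show ?thesis unfolding pair_factor_def by simp
qed

section \<open>Admissible points and pole sums\<close>

definition admissible :: "'a::field \<Rightarrow> ('i \<Rightarrow> 'a) \<Rightarrow> 'i set \<Rightarrow> bool" where
  "admissible Q w K \<longleftrightarrow> Q \<noteq> 0 \<and>
     (\<forall>k\<in>K. w k \<noteq> 0 \<and> w k \<noteq> 1 \<and> Q * w k \<noteq> 1 \<and> Q * (w k)\<^sup>2 \<noteq> 1) \<and>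
     (\<forall>i\<in>K. \<forall>j\<in>K. i \<noteq> j \<longrightarrow> w i \<noteq> w j \<and> Q * w i * w j \<noteq> 1)"

lemma admissible_subset: "admissible Q w K \<Longrightarrow> L \<subseteq> K \<Longrightarrow> admissible Q w L"
  unfolding admissible_def by (meson subsetD)

lemma dual_point_iffs:
  fixes Q z y :: "'a::field"
  assumes "Q \<noteq> 0" "z \<noteq> 0" "y \<noteq> 0"
  shows "1 / (Q * z) \<noteq> 0"
    and "1 / (Q * z) = 1 \<longleftrightarrow> Q * z = 1"
    and "Q * (1 / (Q * z)) = 1 \<longleftrightarrow> z = 1"
    and "Q * (1 / (Q * z))\<^sup>2 = 1 \<longleftrightarrow> Q * z\<^sup>2 = 1"
    and "1 / (Q * z) = y \<longleftrightarrow> Q * y * z = 1"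
    and "y = 1 / (Q * z) \<longleftrightarrow> Q * y * z = 1"
    and "1 / (Q * z) = 1 / (Q * y) \<longleftrightarrow> z = y"
    and "Q * (1 / (Q * z)) * y = 1 \<longleftrightarrow> y = z"
    and "Q * y * (1 / (Q * z)) = 1 \<longleftrightarrow> y = z"
    and "Q * (1 / (Q * z)) * (1 / (Q * y)) = 1 \<longleftrightarrow> Q * z * y = 1"
  using assms by (auto simp: field_simps power2_eq_square)

lemma admissible_flip:
  assumes "admissible Q w K"
  shows "admissible Q (\<lambda>k. signed_point Q (s k) (w k)) K"
proof -
  have Q: "Q \<noteq> 0" using assms by (simp add: admissible_def)
  have single: "signed_point Q (s k) (w k) \<noteq> 0 \<and> signed_point Q (s k) (w k) \<noteq> 1 \<and>
      Q * signed_point Q (s k) (w k) \<noteq> 1 \<and> Q * (signed_point Q (s k) (w k))\<^sup>2 \<noteq> 1"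
    if "k \<in> K" for k
  proof -
    have "w k \<noteq> 0" "w k \<noteq> 1" "Q * w k \<noteq> 1" "Q * (w k)\<^sup>2 \<noteq> 1"
      using assms that by (simp_all add: admissible_def)
    then show ?thesis using dual_point_iffs(1-4)[OF Q, of "w k"] by (simp add: signed_point_def)
  qed
  have pair: "signed_point Q (s i) (w i) \<noteq> signed_point Q (s j) (w j) \<and>
      Q * signed_point Q (s i) (w i) * signed_point Q (s j) (w j) \<noteq> 1"
    if "i \<in> K" "j \<in> K" "i \<noteq> j" for i j
  proof -
    have "w i \<noteq> 0" "w j \<noteq> 0" "w i \<noteq> w j" "Q * w i * w j \<noteq> 1" "Q * w j * w i \<noteq> 1"
      using assms that by (auto simp: admissible_def)
    then show ?thesis
      using dual_point_iffs(5-10)[OF Q, of "w i" "w j"] dual_point_iffs(5-10)[OF Q, of "w j" "w i"]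
      by (simp add: signed_point_def mult_ac)
  qed
  show ?thesis unfolding admissible_def using Q single pair by simp
qed

definition poles :: "'a::field \<Rightarrow> ('i \<Rightarrow> 'a) \<Rightarrow> 'i set \<Rightarrow> 'a set" where
  "poles Q w K = {signed_point Q e (w k) | k e. k \<in> K}"

lemma signed_point_in_poles: "k \<in> K \<Longrightarrow> signed_point Q e (w k) \<in> poles Q w K"
  unfolding poles_def by blast

lemma poles_eq_image: "poles Q w K = (\<lambda>(k, e). signed_point Q e (w k)) ` (K \<times> UNIV)"
  unfolding poles_def by auto

lemma admissible_pole:
  assumes "admissible Q w K" "p \<in> poles Q w K"
  shows "p \<noteq> 0" "p \<noteq> 1" "Q * p \<noteq> 1" "Q * p\<^sup>2 \<noteq> 1"
proof -
  obtain k e where k: "k \<in> K" and p: "p = signed_point Q e (w k)"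
    using assms(2) unfolding poles_def by blast
  have "admissible Q (\<lambda>k. signed_point Q e (w k)) K" by (rule admissible_flip[OF assms(1)])
  then show "p \<noteq> 0" "p \<noteq> 1" "Q * p \<noteq> 1" "Q * p\<^sup>2 \<noteq> 1"
    using k unfolding p admissible_def by simp_all
qed

lemma admissible_pairD:
  "admissible Q w K \<Longrightarrow> i \<in> K \<Longrightarrow> j \<in> K \<Longrightarrow> i \<noteq> j \<Longrightarrow> w i \<noteq> w j \<and> Q * w i * w j \<noteq> 1"
  by (simp add: admissible_def)

lemma admissible_signed_points_distinct:
  assumes "admissible Q w K" "i \<in> K" "j \<in> K" "i \<noteq> j"
  shows "signed_point Q e (w i) \<noteq> signed_point Q e' (w j)"
    and "Q * signed_point Q e (w i) * signed_point Q e' (w j) \<noteq> 1"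
proof -
  have "admissible Q (\<lambda>k. signed_point Q (if k = i then e else e') (w k)) K"
    by (rule admissible_flip[OF assms(1)])
  from admissible_pairD[OF this assms(2-4)]
  have "signed_point Q (if i = i then e else e') (w i) \<noteq> signed_point Q (if j = i then e else e') (w j) \<and>
      Q * signed_point Q (if i = i then e else e') (w i) * signed_point Q (if j = i then e else e') (w j) \<noteq> 1" .
  then show "signed_point Q e (w i) \<noteq> signed_point Q e' (w j)"
    and "Q * signed_point Q e (w i) * signed_point Q e' (w j) \<noteq> 1"
    using assms(4) by auto
qed

lemma poles_eq: "poles Q w K = w ` K \<union> (\<lambda>k. 1 / (Q * w k)) ` K"
proof -
  have "(\<lambda>(k, e). signed_point Q e (w k)) ` (K \<times> {False}) = w ` K"
    "(\<lambda>(k, e). signed_point Q e (w k)) ` (K \<times> {True}) = (\<lambda>k. 1 / (Q * w k)) ` K"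
    by (force simp: signed_point_def)+
  moreover have "K \<times> UNIV = K \<times> {False} \<union> K \<times> {True}" by auto
  ultimately show ?thesis unfolding poles_eq_image by (simp only: image_Un)
qed

lemma one_divide_eq_minus_one_iff: "1 / x = -1 \<longleftrightarrow> x = (-1::'a::field)"
proof -
  have "1 / x = -1 \<longleftrightarrow> inverse x = inverse (-1)" by (simp add: inverse_eq_divide)
  also have "\<dots> \<longleftrightarrow> x = -1" by (rule inverse_eq_iff_eq)
  finally show ?thesis .
qed

lemma minus_one_notin_poles_iff:
  "-1 \<notin> poles Q w K \<longleftrightarrow> (\<forall>k\<in>K. w k \<noteq> -1 \<and> Q * w k \<noteq> -1)"
proof -
  have "-1 = 1 / (Q * w k) \<longleftrightarrow> Q * w k = -1" for k
    using one_divide_eq_minus_one_iff[of "Q * w k"] by auto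
  then show ?thesis unfolding poles_eq by (auto intro: rev_image_eqI)
qed

definition pole_sum :: "'a::field \<Rightarrow> ('i \<Rightarrow> 'a) \<Rightarrow> 'i set \<Rightarrow> ('a \<Rightarrow> 'a) \<Rightarrow> 'a" where
  "pole_sum Q w K \<psi> = (\<Sum>k\<in>K. \<Sum>e\<in>UNIV. \<psi> (signed_point Q e (w k)) *
     (\<Prod>j\<in>K - {k}. pair_factor Q (signed_point Q e (w k)) (w j)))"

lemma pole_sum_cong:
  assumes "\<And>p. p \<in> poles Q w K \<Longrightarrow> \<psi> p = \<phi> p"
  shows "pole_sum Q w K \<psi> = pole_sum Q w K \<phi>"
proof -
  have "\<psi> (signed_point Q e (w k)) = \<phi> (signed_point Q e (w k))" if "k \<in> K" for k e
    using assms that unfolding poles_def by blast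
  then show ?thesis unfolding pole_sum_def by (intro sum.cong refl) simp
qed

lemma pole_sum_add: "pole_sum Q w K (\<lambda>p. \<psi> p + \<phi> p) = pole_sum Q w K \<psi> + pole_sum Q w K \<phi>"
  unfolding pole_sum_def by (simp add: distrib_right sum.distrib)

lemma pole_sum_cmult: "pole_sum Q w K (\<lambda>p. c * \<psi> p) = c * pole_sum Q w K \<psi>"
  unfolding pole_sum_def by (simp add: sum_distrib_left mult.assoc)

lemma pole_sum_insert:
  assumes "finite K" "a \<notin> K"
  shows "pole_sum Q w (insert a K) \<psi> =
    (\<Sum>e\<in>UNIV. \<psi> (signed_point Q e (w a)) * (\<Prod>j\<in>K. pair_factor Q (signed_point Q e (w a)) (w j))) +
    pole_sum Q w K (\<lambda>p. \<psi> p * pair_factor Q p (w a))"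
proof -
  have "(\<Prod>j\<in>insert a K - {k}. pair_factor Q p (w j)) = pair_factor Q p (w a) * (\<Prod>j\<in>K - {k}. pair_factor Q p (w j))"
    if "k \<in> K" for k p
  proof -
    have "insert a K - {k} = insert a (K - {k})" using that assms(2) by auto
    then show ?thesis using assms by simp
  qed
  then have "(\<Sum>k\<in>K. \<Sum>e\<in>UNIV. \<psi> (signed_point Q e (w k)) *
      (\<Prod>j\<in>insert a K - {k}. pair_factor Q (signed_point Q e (w k)) (w j))) =
      pole_sum Q w K (\<lambda>p. \<psi> p * pair_factor Q p (w a))"
    unfolding pole_sum_def by (intro sum.cong refl) (simp add: mult.assoc)
  then show ?thesis using assms by (simp add: pole_sum_def)
qed

section \<open>Partial fractions of the product of pair factors\<close>

lemma sum_simple_fractions_mult: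
  fixes F G :: "'a::field \<Rightarrow> 'a"
  assumes "finite I" "finite J"
    and F: "\<And>x. x \<notin> a ` I \<Longrightarrow> F x = C + (\<Sum>i\<in>I. c i / (x - a i))"
    and G: "\<And>x. x \<notin> b ` J \<Longrightarrow> G x = D + (\<Sum>j\<in>J. r j / (x - b j))"
    and disjoint: "a ` I \<inter> b ` J = {}"
    and x: "x \<notin> a ` I" "x \<notin> b ` J"
  shows "F x * G x = C * D + (\<Sum>i\<in>I. c i * G (a i) / (x - a i)) + (\<Sum>j\<in>J. r j * F (b j) / (x - b j))"
proof -
  have split: "c i / (x - a i) * (r j / (x - b j)) =
      c i / (x - a i) * (r j / (a i - b j)) + r j / (x - b j) * (c i / (b j - a i))"
    if "i \<in> I" "j \<in> J" for i j
  proof -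
    have "a i \<noteq> b j" using disjoint that by blast
    moreover have "x \<noteq> a i" "x \<noteq> b j" using x that by auto
    ultimately show ?thesis by (simp add: divide_simps) (simp add: algebra_simps)
  qed
  have Ga: "(\<Sum>j\<in>J. r j / (a i - b j)) = G (a i) - D" if "i \<in> I" for i
  proof -
    have "a i \<notin> b ` J" using disjoint that by blast
    then show ?thesis using G by simp
  qed
  have Fb: "(\<Sum>i\<in>I. c i / (b j - a i)) = F (b j) - C" if "j \<in> J" for j
  proof -
    have "b j \<notin> a ` I" using disjoint that by blast
    then show ?thesis using F by simp
  qed
  have "(\<Sum>i\<in>I. c i / (x - a i)) * (\<Sum>j\<in>J. r j / (x - b j)) =
      (\<Sum>i\<in>I. \<Sum>j\<in>J. c i / (x - a i) * (r j / (a i - b j)) + r j / (x - b j) * (c i / (b j - a i)))"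
    unfolding sum_product by (intro sum.cong refl split)
  also have "\<dots> = (\<Sum>i\<in>I. c i / (x - a i) * (\<Sum>j\<in>J. r j / (a i - b j))) +
      (\<Sum>j\<in>J. r j / (x - b j) * (\<Sum>i\<in>I. c i / (b j - a i)))"
    by (simp add: sum.distrib sum_distrib_left sum.swap[of _ I J])
  also have "\<dots> = (\<Sum>i\<in>I. c i * G (a i) / (x - a i)) - D * (\<Sum>i\<in>I. c i / (x - a i)) +
      ((\<Sum>j\<in>J. r j * F (b j) / (x - b j)) - C * (\<Sum>j\<in>J. r j / (x - b j)))"
    by (simp add: Ga Fb right_diff_distrib diff_divide_distrib sum_subtractf sum_distrib_left mult_ac)
  finally have cross: "(\<Sum>i\<in>I. c i / (x - a i)) * (\<Sum>j\<in>J. r j / (x - b j)) = \<dots>" .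
  show ?thesis
    unfolding F[OF x(1)] G[OF x(2)] distrib_left distrib_right cross by (simp add: algebra_simps)
qed

lemma prod_pair_factor_partial_fractions:
  fixes w :: "'i \<Rightarrow> 'a::field"
  assumes "finite K" "admissible Q w K" "x \<notin> poles Q w K"
  shows "(\<Prod>j\<in>K. pair_factor Q x (w j)) =
    (1 / Q) ^ card K + pole_sum Q w K (\<lambda>p. pair_residue Q p / (x - p))"
  using assms
proof (induction K arbitrary: x rule: finite_induct)
  case empty
  then show ?case by (simp add: pole_sum_def)
next
  case (insert a K)
  have adm: "admissible Q w K" using insert.prems(1) admissible_subset by blast
  have Q: "Q \<noteq> 0" and wa: "w a \<noteq> 0" "Q * (w a)\<^sup>2 \<noteq> 1"
    using insert.prems(1) unfolding admissible_def by auto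
  define pt where "pt = (\<lambda>(k, e). signed_point Q e (w k))"
  define c where "c = (\<lambda>(k, e). pair_residue Q (pt (k, e)) * (\<Prod>j\<in>K - {k}. pair_factor Q (pt (k, e)) (w j)))"
  define b where "b = (\<lambda>e. signed_point Q e (w a))"
  have poles_K: "poles Q w K = pt ` (K \<times> UNIV)"
    unfolding poles_eq_image pt_def ..
  have poles_insert: "poles Q w (insert a K) = b ` UNIV \<union> poles Q w K"
    unfolding poles_def b_def by blast
  have disjoint: "pt ` (K \<times> UNIV) \<inter> b ` UNIV = {}"
    using admissible_signed_points_distinct(1)[OF insert.prems(1)] insert.hyps(2)
    unfolding pt_def b_def by fastforce
  have F: "(\<Prod>j\<in>K. pair_factor Q y (w j)) = (1 / Q) ^ card K + (\<Sum>i\<in>K \<times> UNIV. c i / (y - pt i))"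
    if "y \<notin> pt ` (K \<times> UNIV)" for y
    using insert.IH[OF adm, of y] that unfolding poles_K
    by (simp add: pole_sum_def sum.cartesian_product c_def pt_def case_prod_beta mult.commute)
  have G: "pair_factor Q y (w a) = 1 / Q + (\<Sum>e\<in>UNIV. pair_residue Q (b e) / (y - b e))"
    if "y \<notin> b ` UNIV" for y
    unfolding b_def
  proof (rule pair_factor_partial_fractions[OF Q wa])
    show "y \<noteq> w a" "Q * y * w a \<noteq> 1"
      using that Q wa unfolding b_def signed_point_def by (auto simp: field_simps)
  qed
  have x: "x \<notin> pt ` (K \<times> UNIV)" "x \<notin> b ` UNIV"
    using insert.prems(2) unfolding poles_insert poles_K by auto
  have "(\<Prod>j\<in>insert a K. pair_factor Q x (w j)) = (\<Prod>j\<in>K. pair_factor Q x (w j)) * pair_factor Q x (w a)"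
    using insert.hyps by (simp add: mult.commute)
  also have "\<dots> = (1 / Q) ^ card K * (1 / Q)
      + (\<Sum>i\<in>K \<times> UNIV. c i * pair_factor Q (pt i) (w a) / (x - pt i))
      + (\<Sum>e\<in>UNIV. pair_residue Q (b e) * (\<Prod>j\<in>K. pair_factor Q (b e) (w j)) / (x - b e))"
    by (rule sum_simple_fractions_mult[OF _ _ F G disjoint x]) (use insert.hyps in auto)
  also have "\<dots> = (1 / Q) ^ card (insert a K) + pole_sum Q w (insert a K) (\<lambda>p. pair_residue Q p / (x - p))"
    unfolding pole_sum_insert[OF insert.hyps] unfolding pole_sum_def sum.cartesian_product'
    using insert.hyps by (simp add: c_def pt_def b_def mult_ac)
  finally show ?case .
qed

section \<open>Evaluation of pole sums\<close>

lemma pair_factor_has_derivative_at_one: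
  fixes Q y :: "'a::real_normed_field"
  assumes "y \<noteq> 1" "Q * y \<noteq> 1"
  shows "((\<lambda>x. pair_factor Q x y) has_field_derivative
           - (2 * (1 - Q) * y / ((1 - y) * (1 - Q * y)))) (at 1)"
proof -
  have "1 - y \<noteq> 0" "1 - Q * y \<noteq> 0" using assms by auto
  then show ?thesis unfolding pair_factor_def
    by (auto intro!: derivative_eq_intros simp: divide_simps) (simp add: algebra_simps power2_eq_square)
qed

lemma finite_poles: "finite K \<Longrightarrow> finite (poles Q w K)"
  unfolding poles_eq by simp

lemma has_field_derivative_pole_sum:
  fixes w :: "'i \<Rightarrow> 'a::real_normed_field"
  assumes "x\<^sub>0 \<notin> poles Q w K"
  shows "((\<lambda>x. pole_sum Q w K (\<lambda>p. r p / (x - p))) has_field_derivative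
           - pole_sum Q w K (\<lambda>p. r p / (x\<^sub>0 - p)\<^sup>2)) (at x\<^sub>0)"
proof -
  have simple_pole: "((\<lambda>x. r p / (x - p) * c) has_field_derivative - (r p / (x\<^sub>0 - p)\<^sup>2 * c)) (at x\<^sub>0)"
    if "p \<in> poles Q w K" for p c
  proof -
    have "x\<^sub>0 - p \<noteq> 0" using assms that by auto
    then show ?thesis by (auto intro!: derivative_eq_intros simp: power2_eq_square)
  qed
  have "((\<lambda>x. pole_sum Q w K (\<lambda>p. r p / (x - p))) has_field_derivative
      (\<Sum>k\<in>K. \<Sum>e\<in>UNIV. - (r (signed_point Q e (w k)) / (x\<^sub>0 - signed_point Q e (w k))\<^sup>2 *
        (\<Prod>j\<in>K - {k}. pair_factor Q (signed_point Q e (w k)) (w j))))) (at x\<^sub>0)"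
    unfolding pole_sum_def by (intro DERIV_sum simple_pole signed_point_in_poles)
  then show ?thesis by (simp add: pole_sum_def sum_negf)
qed

text \<open>Differentiate the partial fraction expansion of the product at \<open>x = 1\<close>.\<close>

lemma pole_sum_double_pole_at_one:
  fixes w :: "'i \<Rightarrow> 'a::real_normed_field"
  assumes "finite K" "admissible Q w K"
  shows "pole_sum Q w K (\<lambda>p. pair_residue Q p / (1 - p)\<^sup>2) =
    (\<Sum>k\<in>K. 2 * (1 - Q) * w k / ((1 - w k) * (1 - Q * w k)))"
proof -
  define P where "P = (\<lambda>x. \<Prod>j\<in>K. pair_factor Q x (w j))"
  define R where "R = (\<lambda>x. (1 / Q) ^ card K + pole_sum Q w K (\<lambda>p. pair_residue Q p / (x - p)))"
  have one: "1 \<notin> poles Q w K" using admissible_pole(2)[OF assms(2)] by blast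
  have w: "w k \<noteq> 1" "Q * w k \<noteq> 1" if "k \<in> K" for k
    using assms(2) that by (simp_all add: admissible_def)
  have "(P has_field_derivative
      (\<Sum>k\<in>K. - (2 * (1 - Q) * w k / ((1 - w k) * (1 - Q * w k))) *
        (\<Prod>j\<in>K - {k}. pair_factor Q 1 (w j)))) (at 1)"
    unfolding P_def by (intro has_field_derivative_prod pair_factor_has_derivative_at_one w)
  moreover have "(\<Prod>j\<in>K - {k}. pair_factor Q 1 (w j)) = 1" for k
    using w by (intro prod.neutral) (simp add: pair_factor_at_one)
  ultimately have P': "(P has_field_derivative - (\<Sum>k\<in>K. 2 * (1 - Q) * w k / ((1 - w k) * (1 - Q * w k)))) (at 1)"
    by (simp add: sum_negf)
  have R': "(R has_field_derivative - pole_sum Q w K (\<lambda>p. pair_residue Q p / (1 - p)\<^sup>2)) (at 1)"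
    unfolding R_def using DERIV_add[OF DERIV_const has_field_derivative_pole_sum[OF one]] by simp
  have "open (- poles Q w K)"
    using finite_poles[OF assms(1), of Q w] by (simp add: finite_imp_closed open_Compl)
  moreover have "P x = R x" if "x \<in> - poles Q w K" for x
    using prod_pair_factor_partial_fractions[OF assms, of x] that by (simp add: P_def R_def)
  ultimately have "(R has_field_derivative - (\<Sum>k\<in>K. 2 * (1 - Q) * w k / ((1 - w k) * (1 - Q * w k)))) (at 1)"
    using one by (intro has_field_derivative_transform_within_open[OF P']) auto
  from DERIV_unique[OF this R'] show ?thesis by simp
qed

lemma pole_sum_simple_pole:
  assumes "finite K" "admissible Q w K" "x \<notin> poles Q w K"
  shows "pole_sum Q w K (\<lambda>p. pair_residue Q p / (x - p)) =
    (\<Prod>j\<in>K. pair_factor Q x (w j)) - (1 / Q) ^ card K"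
  using prod_pair_factor_partial_fractions[OF assms] by simp

lemma pole_sum_simple_pole_at_zero:
  assumes "finite K" "admissible Q w K"
  shows "pole_sum Q w K (\<lambda>p. pair_residue Q p / (0 - p)) = Q ^ card K - (1 / Q) ^ card K"
proof -
  have "(\<Prod>j\<in>K. pair_factor Q 0 (w j)) = Q ^ card K"
    using assms(2) by (simp add: admissible_def pair_factor_at_zero)
  moreover have "0 \<notin> poles Q w K" using admissible_pole(1)[OF assms(2)] by blast
  note pole_sum_simple_pole[OF assms this]
  ultimately show ?thesis by simp
qed

lemma pole_sum_simple_pole_at_one:
  assumes "finite K" "admissible Q w K"
  shows "pole_sum Q w K (\<lambda>p. pair_residue Q p / (1 - p)) = 1 - (1 / Q) ^ card K"
proof -
  have "1 \<notin> poles Q w K" using admissible_pole(2)[OF assms(2)] by blast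
  moreover have "(\<Prod>j\<in>K. pair_factor Q 1 (w j)) = 1"
    using assms(2) by (intro prod.neutral) (simp add: admissible_def pair_factor_at_one)
  ultimately show ?thesis using pole_sum_simple_pole[OF assms] by simp
qed

lemma pole_sum_simple_pole_at_minus_one:
  assumes "finite K" "admissible Q w K" "-1 \<notin> poles Q w K"
  shows "pole_sum Q w K (\<lambda>p. pair_residue Q p / (-1 - p)) = 1 - (1 / Q) ^ card K"
proof -
  have "(\<Prod>j\<in>K. pair_factor Q (-1) (w j)) = 1"
    using assms(3) unfolding minus_one_notin_poles_iff
    by (intro prod.neutral) (simp add: pair_factor_at_minus_one)
  then show ?thesis using pole_sum_simple_pole[OF assms] by simp
qed

text \<open>Partial fractions in \<open>p\<close> of \<open>\<psi> p / pair_residue Q p\<close> for \<open>\<psi> = 1\<close> and \<open>\<psi> = \<phi>\<^sub>1\<close>.\<close>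

lemma const_partial_fractions:
  fixes Q p :: complex
  assumes "Q \<noteq> 1" "p \<noteq> 0" "p \<noteq> 1" "p \<noteq> -1" "Q * p\<^sup>2 \<noteq> 1"
  shows "1 = - (1 / (1 - Q)) * (pair_residue Q p / (0 - p))
    + 1 / 2 * (pair_residue Q p / (1 - p)) + 1 / 2 * (pair_residue Q p / (-1 - p))"
proof -
  have "1 - Q \<noteq> 0" "1 - p \<noteq> 0" "-1 - p \<noteq> 0" "1 - Q * p\<^sup>2 \<noteq> 0"
    using assms by (auto simp: add_eq_0_iff)
  then show ?thesis unfolding pair_residue_def using assms(2)
    by (simp add: divide_simps) (simp add: algebra_simps power2_eq_square)
qed

lemma phi_partial_fractions:
  fixes Q A p :: complex
  assumes "p \<noteq> 1" "p \<noteq> -1" "Q * p\<^sup>2 \<noteq> 1"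
  shows "(1 - Q - A + A * p) / (1 - Q * p\<^sup>2) * ((1 - Q) * p / (1 - p)) =
    (1 - Q) / 2 * (pair_residue Q p / (1 - p)\<^sup>2)
    + (1 - Q - 2 * A) / 4 * (pair_residue Q p / (1 - p))
    + - ((1 - Q - 2 * A) / 4) * (pair_residue Q p / (-1 - p))"
proof -
  have "1 - p \<noteq> 0" "-1 - p \<noteq> 0" "1 - Q * p\<^sup>2 \<noteq> 0"
    using assms by (auto simp: add_eq_0_iff)
  then show ?thesis unfolding pair_residue_def
    by (simp add: divide_simps) (simp add: algebra_simps power2_eq_square)
qed

lemma pole_sum_one_generic:
  fixes w :: "'i \<Rightarrow> complex"
  assumes "finite K" "admissible Q w K" "-1 \<notin> poles Q w K" "Q \<noteq> 1" "card K = Suc n"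
  shows "pole_sum Q w K (\<lambda>_. 1) = (1 - Q ^ Suc n) * (1 + Q ^ n) / (Q ^ n * (1 - Q))"
proof -
  have Q: "Q \<noteq> 0" using assms(2) by (simp add: admissible_def)
  have "pole_sum Q w K (\<lambda>_. 1) = pole_sum Q w K (\<lambda>p. - (1 / (1 - Q)) * (pair_residue Q p / (0 - p))
      + 1 / 2 * (pair_residue Q p / (1 - p)) + 1 / 2 * (pair_residue Q p / (-1 - p)))"
    using admissible_pole[OF assms(2)] assms(3,4)
    by (intro pole_sum_cong const_partial_fractions) auto
  also have "\<dots> = - (1 / (1 - Q)) * (Q ^ Suc n - (1 / Q) ^ Suc n) + (1 - (1 / Q) ^ Suc n)"
    unfolding pole_sum_add pole_sum_cmult pole_sum_simple_pole_at_zero[OF assms(1,2)]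
      pole_sum_simple_pole_at_one[OF assms(1,2)] pole_sum_simple_pole_at_minus_one[OF assms(1-3)] assms(5)
    by simp
  also have "\<dots> = (1 - Q ^ Suc n) * (1 + Q ^ n) / (Q ^ n * (1 - Q))"
    using Q assms(4) by (simp add: divide_simps) (simp add: algebra_simps)
  finally show ?thesis .
qed

lemma pole_sum_phi_generic:
  fixes w :: "'i \<Rightarrow> complex"
  assumes "finite K" "admissible Q w K" "-1 \<notin> poles Q w K"
  shows "pole_sum Q w K (\<lambda>p. (1 - Q - A + A * p) / (1 - Q * p\<^sup>2) * ((1 - Q) * p / (1 - p))) =
    (\<Sum>k\<in>K. (1 - Q)\<^sup>2 * w k / ((1 - w k) * (1 - Q * w k)))"
proof -
  have "pole_sum Q w K (\<lambda>p. (1 - Q - A + A * p) / (1 - Q * p\<^sup>2) * ((1 - Q) * p / (1 - p))) =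
      pole_sum Q w K (\<lambda>p. (1 - Q) / 2 * (pair_residue Q p / (1 - p)\<^sup>2)
        + (1 - Q - 2 * A) / 4 * (pair_residue Q p / (1 - p))
        + - ((1 - Q - 2 * A) / 4) * (pair_residue Q p / (-1 - p)))"
    using admissible_pole[OF assms(2)] assms(3)
    by (intro pole_sum_cong phi_partial_fractions) auto
  also have "\<dots> = (1 - Q) / 2 * (\<Sum>k\<in>K. 2 * (1 - Q) * w k / ((1 - w k) * (1 - Q * w k)))"
    unfolding pole_sum_add pole_sum_cmult pole_sum_double_pole_at_one[OF assms(1,2)]
      pole_sum_simple_pole_at_one[OF assms(1,2)] pole_sum_simple_pole_at_minus_one[OF assms]
    by simp
  also have "\<dots> = (\<Sum>k\<in>K. (1 - Q)\<^sup>2 * w k / ((1 - w k) * (1 - Q * w k)))"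
  proof -
    have "(1 - Q) / 2 * (2 * (1 - Q) * x / d) = (1 - Q)\<^sup>2 * x / d" for x d :: complex
      by (cases "d = 0") (simp_all add: field_simps power2_eq_square)
    then show ?thesis by (simp add: sum_distrib_left)
  qed
  finally show ?thesis .
qed

section \<open>Removing the condition that \<open>-1\<close> is not a pole\<close>

lemma tendsto_pair_factor:
  fixes Q x y :: "'a::real_normed_field"
  assumes "(X \<longlongrightarrow> x) F" "(Y \<longlongrightarrow> y) F" "x \<noteq> y" "Q * x * y \<noteq> 1"
  shows "((\<lambda>t. pair_factor Q (X t) (Y t)) \<longlongrightarrow> pair_factor Q x y) F"
  using assms unfolding pair_factor_def by (auto intro!: tendsto_intros)

lemma tendsto_shift_at_zero: "((\<lambda>t. z + t) \<longlongrightarrow> z) (at (0::'a::real_normed_vector))"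
  using tendsto_add[OF tendsto_const tendsto_ident_at, of z 0 UNIV] by simp

lemma tendsto_pole_sum_shift:
  fixes w :: "'i \<Rightarrow> 'a::real_normed_field"
  assumes "admissible Q w K" "\<And>p. p \<in> poles Q w K \<Longrightarrow> isCont \<psi> p"
  shows "((\<lambda>t. pole_sum Q (\<lambda>k. w k + t) K \<psi>) \<longlongrightarrow> pole_sum Q w K \<psi>) (at 0)"
proof -
  have point: "((\<lambda>t. signed_point Q e (w k + t)) \<longlongrightarrow> signed_point Q e (w k)) (at 0)"
    if "k \<in> K" for k e
  proof -
    have "Q * w k \<noteq> 0" using assms(1) that by (simp add: admissible_def)
    then show ?thesis
      unfolding signed_point_def using tendsto_shift_at_zero[of "w k"] by (auto intro!: tendsto_intros)
  qed
  have factor: "((\<lambda>t. pair_factor Q (signed_point Q e (w k + t)) (w j + t))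
      \<longlongrightarrow> pair_factor Q (signed_point Q e (w k)) (w j)) (at 0)"
    if "k \<in> K" "j \<in> K - {k}" for k j e
  proof (rule tendsto_pair_factor[OF point[OF that(1)] tendsto_shift_at_zero])
    show "signed_point Q e (w k) \<noteq> w j" "Q * signed_point Q e (w k) * w j \<noteq> 1"
      using admissible_signed_points_distinct[OF assms(1) that(1), of j e False] that
      by (auto simp: signed_point_def)
  qed
  have psi: "((\<lambda>t. \<psi> (signed_point Q e (w k + t))) \<longlongrightarrow> \<psi> (signed_point Q e (w k))) (at 0)"
    if "k \<in> K" for k e
    using assms(2)[OF signed_point_in_poles[OF that]] point[OF that] by (rule isCont_tendsto_compose)
  show ?thesis
    unfolding pole_sum_def by (intro tendsto_sum tendsto_mult tendsto_prod psi factor)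
qed

lemma eventually_admissible_shift:
  fixes w :: "'i \<Rightarrow> complex"
  assumes "finite K" "admissible Q w K"
  shows "\<forall>\<^sub>F t in at 0. admissible Q (\<lambda>k. w k + t) K \<and> -1 \<notin> poles Q (\<lambda>k. w k + t) K"
proof -
  have Q: "Q \<noteq> 0" using assms(2) by (simp add: admissible_def)
  have single: "\<forall>\<^sub>F t in at 0. w k + t \<noteq> 0 \<and> w k + t \<noteq> 1 \<and> Q * (w k + t) \<noteq> 1 \<and>
      Q * (w k + t)\<^sup>2 \<noteq> 1 \<and> w k + t \<noteq> -1 \<and> Q * (w k + t) \<noteq> -1"
    if "k \<in> K" for k
  proof -
    note lim = tendsto_shift_at_zero[of "w k"]
    have "w k \<noteq> 0" "w k \<noteq> 1" "Q * w k \<noteq> 1" "Q * (w k)\<^sup>2 \<noteq> 1"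
      using assms(2) that by (simp_all add: admissible_def)
    then have "\<forall>\<^sub>F t in at 0. w k + t \<noteq> 0" "\<forall>\<^sub>F t in at 0. w k + t \<noteq> 1"
      "\<forall>\<^sub>F t in at 0. Q * (w k + t) \<noteq> 1" "\<forall>\<^sub>F t in at 0. Q * (w k + t)\<^sup>2 \<noteq> 1"
      by (auto intro!: tendsto_imp_eventually_ne tendsto_intros lim)
    moreover have "\<forall>\<^sub>F t in at 0. w k + t \<noteq> -1"
      using eventually_neq_at_within[of "-1 - w k" 0 UNIV] by eventually_elim (auto simp: eq_diff_eq add.commute)
    moreover have "\<forall>\<^sub>F t in at 0. Q * (w k + t) \<noteq> -1"
      using eventually_neq_at_within[of "-1 / Q - w k" 0 UNIV] by eventually_elim (use Q in \<open>auto simp: field_simps\<close>)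
    ultimately show ?thesis by eventually_elim blast
  qed
  have pair: "\<forall>\<^sub>F t in at 0. i \<noteq> j \<longrightarrow> Q * (w i + t) * (w j + t) \<noteq> 1"
    if "i \<in> K" "j \<in> K" for i j
  proof (cases "i = j")
    case False
    then have "Q * w i * w j \<noteq> 1" using admissible_pairD[OF assms(2) that] by simp
    then have "\<forall>\<^sub>F t in at 0. Q * (w i + t) * (w j + t) \<noteq> 1"
      by (auto intro!: tendsto_imp_eventually_ne tendsto_intros tendsto_shift_at_zero)
    then show ?thesis by eventually_elim simp
  qed simp
  have "\<forall>\<^sub>F t in at 0. \<forall>k\<in>K. w k + t \<noteq> 0 \<and> w k + t \<noteq> 1 \<and> Q * (w k + t) \<noteq> 1 \<and>
      Q * (w k + t)\<^sup>2 \<noteq> 1 \<and> w k + t \<noteq> -1 \<and> Q * (w k + t) \<noteq> -1"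
    using single by (intro eventually_ball_finite[OF assms(1)]) blast
  moreover have "\<forall>\<^sub>F t in at 0. \<forall>i\<in>K. \<forall>j\<in>K. i \<noteq> j \<longrightarrow> Q * (w i + t) * (w j + t) \<noteq> 1"
    using pair by (intro eventually_ball_finite[OF assms(1)] ballI) blast
  ultimately show ?thesis
  proof eventually_elim
    case (elim t)
    have "w i \<noteq> w j" if "i \<in> K" "j \<in> K" "i \<noteq> j" for i j
      using admissible_pairD[OF assms(2) that] by simp
    then show ?case using elim Q unfolding admissible_def minus_one_notin_poles_iff by simp
  qed
qed

text \<open>Shifting all \<open>w\<^sub>k\<close> by a small \<open>t \<noteq> 0\<close> makes \<open>-1\<close> a non-pole, so an identity proved under
  that extra condition extends to every admissible point by continuity.\<close>

lemma pole_sum_eq_by_perturbation: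
  fixes w :: "'i \<Rightarrow> complex"
  assumes "finite K" "admissible Q w K"
    and "\<And>p. p \<in> poles Q w K \<Longrightarrow> isCont \<psi> p"
    and "\<And>v. admissible Q v K \<Longrightarrow> -1 \<notin> poles Q v K \<Longrightarrow> pole_sum Q v K \<psi> = R v"
    and "((\<lambda>t. R (\<lambda>k. w k + t)) \<longlongrightarrow> R w) (at 0)"
  shows "pole_sum Q w K \<psi> = R w"
proof -
  have "\<forall>\<^sub>F t in at 0. pole_sum Q (\<lambda>k. w k + t) K \<psi> = R (\<lambda>k. w k + t)"
    using eventually_admissible_shift[OF assms(1,2)] by eventually_elim (use assms(4) in blast)
  with tendsto_pole_sum_shift[OF assms(2,3)]
  have "((\<lambda>t. R (\<lambda>k. w k + t)) \<longlongrightarrow> pole_sum Q w K \<psi>) (at 0)"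
    by (rule Lim_transform_eventually)
  with assms(5) show ?thesis by (intro tendsto_unique[OF at_neq_bot])
qed

lemma pole_sum_one:
  fixes w :: "'i \<Rightarrow> complex"
  assumes "finite K" "admissible Q w K" "Q \<noteq> 1" "card K = Suc n"
  shows "pole_sum Q w K (\<lambda>_. 1) = (1 - Q ^ Suc n) * (1 + Q ^ n) / (Q ^ n * (1 - Q))"
proof (rule pole_sum_eq_by_perturbation[OF assms(1,2), where R = "\<lambda>_. (1 - Q ^ Suc n) * (1 + Q ^ n) / (Q ^ n * (1 - Q))"])
  show "pole_sum Q v K (\<lambda>_. 1) = (1 - Q ^ Suc n) * (1 + Q ^ n) / (Q ^ n * (1 - Q))"
    if "admissible Q v K" "-1 \<notin> poles Q v K" for v
    using pole_sum_one_generic[OF assms(1) that assms(3,4)] .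
qed simp_all

lemma pole_sum_phi:
  fixes w :: "'i \<Rightarrow> complex"
  assumes "finite K" "admissible Q w K"
  shows "pole_sum Q w K (\<lambda>p. (1 - Q - A + A * p) / (1 - Q * p\<^sup>2) * ((1 - Q) * p / (1 - p))) =
    (\<Sum>k\<in>K. (1 - Q)\<^sup>2 * w k / ((1 - w k) * (1 - Q * w k)))"
proof (rule pole_sum_eq_by_perturbation[OF assms,
      where R = "\<lambda>v. \<Sum>k\<in>K. (1 - Q)\<^sup>2 * v k / ((1 - v k) * (1 - Q * v k))"])
  fix p assume "p \<in> poles Q w K"
  then have "1 - Q * p\<^sup>2 \<noteq> 0" "1 - p \<noteq> 0" using admissible_pole[OF assms(2)] by auto
  then show "isCont (\<lambda>p. (1 - Q - A + A * p) / (1 - Q * p\<^sup>2) * ((1 - Q) * p / (1 - p))) p"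
    by (intro continuous_intros) auto
next
  show "pole_sum Q v K (\<lambda>p. (1 - Q - A + A * p) / (1 - Q * p\<^sup>2) * ((1 - Q) * p / (1 - p))) =
      (\<Sum>k\<in>K. (1 - Q)\<^sup>2 * v k / ((1 - v k) * (1 - Q * v k)))"
    if "admissible Q v K" "-1 \<notin> poles Q v K" for v
    using pole_sum_phi_generic[OF assms(1) that] .
next
  have "(1 - w k) * (1 - Q * w k) \<noteq> 0" if "k \<in> K" for k
    using assms(2) that by (simp add: admissible_def)
  then show "((\<lambda>t. \<Sum>k\<in>K. (1 - Q)\<^sup>2 * (w k + t) / ((1 - (w k + t)) * (1 - Q * (w k + t))))
      \<longlongrightarrow> (\<Sum>k\<in>K. (1 - Q)\<^sup>2 * w k / ((1 - w k) * (1 - Q * w k)))) (at 0)"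
    by (intro tendsto_sum tendsto_intros tendsto_shift_at_zero) auto
qed

section \<open>Signed bijections\<close>

text \<open>As in \<^const>\<open>signed_perms\<close>, a pair \<open>(p, s)\<close> stands for \<open>i \<mapsto> \<plusminus>p i\<close>; it is normalised
  outside \<open>I\<close> so that the representation is unique.\<close>
definition signed_bijs :: "'i set \<Rightarrow> 'i set \<Rightarrow> (('i \<Rightarrow> 'i) \<times> ('i \<Rightarrow> bool)) set" where
  "signed_bijs I M = {(p, s). bij_betw p I M \<and> (\<forall>i. i \<notin> I \<longrightarrow> p i = i) \<and> (\<forall>i. i \<notin> I \<longrightarrow> \<not> s i)}"

lemma signed_perms_eq_signed_bijs: "signed_perms N = signed_bijs {1..N} {1..N}"
proof -
  have "p permutes {1..N} \<longleftrightarrow> bij_betw p {1..N} {1..N} \<and> (\<forall>i. i \<notin> {1..N} \<longrightarrow> p i = i)" for p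
    using permutes_imp_bij permutes_not_in bij_imp_permutes by metis
  then show ?thesis unfolding signed_perms_def signed_bijs_def by auto
qed

lemma signed_bijs_empty: "signed_bijs {} {} = {(id, \<lambda>_. False)}"
  unfolding signed_bijs_def by (auto simp: fun_eq_iff)

lemma finite_signed_bijs:
  assumes "finite I" "finite M"
  shows "finite (signed_bijs I M)"
proof -
  let ?ext = "\<lambda>(p, s). (\<lambda>i. if i \<in> I then p i else i, \<lambda>i. i \<in> I \<and> s i)"
  have "signed_bijs I M \<subseteq> ?ext ` ((I \<rightarrow>\<^sub>E M) \<times> (I \<rightarrow>\<^sub>E UNIV))"
  proof
    fix x assume "x \<in> signed_bijs I M"
    then obtain p s where x: "x = (p, s)" "bij_betw p I M" "\<forall>i. i \<notin> I \<longrightarrow> p i = i" "\<forall>i. i \<notin> I \<longrightarrow> \<not> s i"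
      unfolding signed_bijs_def by blast
    then have "x = ?ext (restrict p I, restrict s I)" by (auto simp: fun_eq_iff)
    moreover have "(restrict p I, restrict s I) \<in> (I \<rightarrow>\<^sub>E M) \<times> (I \<rightarrow>\<^sub>E UNIV)"
      using bij_betw_apply[OF x(2)] by auto
    ultimately show "x \<in> ?ext ` ((I \<rightarrow>\<^sub>E M) \<times> (I \<rightarrow>\<^sub>E UNIV))" by blast
  qed
  moreover have "finite ((I \<rightarrow>\<^sub>E M) \<times> (I \<rightarrow>\<^sub>E (UNIV :: bool set)))"
    using assms by (intro finite_cartesian_product finite_PiE) auto
  ultimately show ?thesis by (rule finite_subset[OF _ finite_imageI])
qed

lemma bij_betw_fun_upd_insert:
  assumes "bij_betw p (I - {i}) (M - {k})" "i \<in> I" "k \<in> M"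
  shows "bij_betw (p(i := k)) I M"
proof -
  have "bij_betw (p(i := k)) (I - {i}) (M - {k})"
    using assms(1) by (rule bij_betw_cong[THEN iffD1, rotated]) auto
  moreover have "bij_betw (p(i := k)) {i} {k}" by simp
  ultimately have "bij_betw (p(i := k)) ((I - {i}) \<union> {i}) ((M - {k}) \<union> {k})"
    by (rule bij_betw_combine) auto
  moreover have "(I - {i}) \<union> {i} = I" "(M - {k}) \<union> {k} = M" using assms(2,3) by auto
  ultimately show ?thesis by simp
qed

lemma bij_betw_fun_upd_remove:
  assumes "bij_betw p I M" "i \<in> I"
  shows "bij_betw (p(i := i)) (I - {i}) (M - {p i})"
proof -
  have "bij_betw p (I - {i}) (M - {p i})"
    by (rule bij_betw_DiffI[OF assms(1), of "{i}"]) (use assms bij_betw_apply in auto)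
  then show ?thesis by (rule bij_betw_cong[THEN iffD1, rotated]) auto
qed

lemma bij_betw_signed_bijs_extend:
  fixes I M :: "'i set"
  assumes "i \<in> I"
  shows "bij_betw (\<lambda>(k, e, p, s). (p(i := k), s(i := e)))
    (SIGMA k:M. SIGMA e:UNIV. signed_bijs (I - {i}) (M - {k})) (signed_bijs I M)"
proof -
  define A where "A = (SIGMA k:M. SIGMA e:(UNIV :: bool set). signed_bijs (I - {i}) (M - {k}))"
  define ext :: "'i \<times> bool \<times> ('i \<Rightarrow> 'i) \<times> ('i \<Rightarrow> bool) \<Rightarrow> ('i \<Rightarrow> 'i) \<times> ('i \<Rightarrow> bool)"
    where "ext = (\<lambda>(k, e, p, s). (p(i := k), s(i := e)))"
  define res :: "('i \<Rightarrow> 'i) \<times> ('i \<Rightarrow> bool) \<Rightarrow> 'i \<times> bool \<times> ('i \<Rightarrow> 'i) \<times> ('i \<Rightarrow> bool)"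
    where "res = (\<lambda>(p, s). (p i, s i, p(i := i), s(i := False)))"
  have "bij_betw ext A (signed_bijs I M)"
  proof (rule bij_betwI[where g = res])
    show "ext \<in> A \<rightarrow> signed_bijs I M"
    proof
      fix z assume "z \<in> A"
      then obtain k e p s where z: "z = (k, e, p, s)" "k \<in> M" and
        p: "bij_betw p (I - {i}) (M - {k})" "\<forall>j. j \<notin> I - {i} \<longrightarrow> p j = j \<and> \<not> s j"
        unfolding A_def signed_bijs_def by auto
      have "bij_betw (p(i := k)) I M" by (rule bij_betw_fun_upd_insert[OF p(1) assms z(2)])
      then show "ext z \<in> signed_bijs I M" using p(2) assms unfolding z ext_def signed_bijs_def by auto
    qed
    show "res \<in> signed_bijs I M \<rightarrow> A"
    proof
      fix x assume "x \<in> signed_bijs I M"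
      then obtain p s where x: "x = (p, s)" and
        p: "bij_betw p I M" "\<forall>j. j \<notin> I \<longrightarrow> p j = j \<and> \<not> s j"
        unfolding signed_bijs_def by auto
      have "bij_betw (p(i := i)) (I - {i}) (M - {p i})" by (rule bij_betw_fun_upd_remove[OF p(1) assms])
      moreover have "p i \<in> M" using bij_betw_apply[OF p(1) assms] .
      ultimately show "res x \<in> A" using p(2) unfolding x res_def A_def signed_bijs_def by auto
    qed
    show "res (ext z) = z" if "z \<in> A" for z
    proof -
      obtain k e p s where z: "z = (k, e, p, s)" "(p, s) \<in> signed_bijs (I - {i}) (M - {k})"
        using \<open>z \<in> A\<close> unfolding A_def by auto
      then have "p i = i" "\<not> s i" unfolding signed_bijs_def by auto
      then show ?thesis unfolding z ext_def res_def by (simp add: fun_eq_iff)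
    qed
    show "ext (res x) = x" for x
      unfolding ext_def res_def by (simp add: case_prod_beta)
  qed
  then show ?thesis unfolding A_def ext_def .
qed

lemma sum_signed_bijs_remove:
  fixes I M :: "'i set"
  assumes "finite I" "finite M" "i \<in> I"
  shows "(\<Sum>x\<in>signed_bijs I M. f x) =
    (\<Sum>k\<in>M. \<Sum>e\<in>UNIV. \<Sum>(p, s)\<in>signed_bijs (I - {i}) (M - {k}). f (p(i := k), s(i := e)))"
proof -
  have "(\<Sum>x\<in>signed_bijs I M. f x) =
      (\<Sum>z\<in>(SIGMA k:M. SIGMA e:UNIV. signed_bijs (I - {i}) (M - {k})).
        f ((\<lambda>(k, e, p, s). (p(i := k), s(i := e))) z))"
    by (rule sum.reindex_bij_betw[OF bij_betw_signed_bijs_extend[OF assms(3)], symmetric])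
  also have "\<dots> = (\<Sum>k\<in>M. \<Sum>e\<in>UNIV. \<Sum>(p, s)\<in>signed_bijs (I - {i}) (M - {k}). f (p(i := k), s(i := e)))"
    using assms(1,2) by (simp add: sum.Sigma finite_signed_bijs split_def)
  finally show ?thesis .
qed

definition ordered_pair_prod :: "'a::field \<Rightarrow> 'i::linorder set \<Rightarrow> ('i \<Rightarrow> 'a) \<Rightarrow> 'a" where
  "ordered_pair_prod Q I z = (\<Prod>i\<in>I. \<Prod>j\<in>{j\<in>I. i < j}. pair_factor Q (z i) (z j))"

lemma ordered_pair_prod_cong:
  "(\<And>i. i \<in> I \<Longrightarrow> z i = z' i) \<Longrightarrow> ordered_pair_prod Q I z = ordered_pair_prod Q I z'"
  unfolding ordered_pair_prod_def by (intro prod.cong refl) auto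

lemma ordered_pair_prod_remove_min:
  assumes "finite I" "i \<in> I" "\<And>j. j \<in> I \<Longrightarrow> i \<le> j"
  shows "ordered_pair_prod Q I z =
    (\<Prod>j\<in>I - {i}. pair_factor Q (z i) (z j)) * ordered_pair_prod Q (I - {i}) z"
proof -
  have later: "{j\<in>I. i < j} = I - {i}" using assms(2,3) by force
  have "(\<Prod>j\<in>{j\<in>I. i' < j}. pair_factor Q (z i') (z j)) =
      (\<Prod>j\<in>{j\<in>I - {i}. i' < j}. pair_factor Q (z i') (z j))" if "i' \<in> I - {i}" for i'
  proof -
    have "{j\<in>I. i' < j} = {j\<in>I - {i}. i' < j}" using assms(3) that by force
    then show ?thesis by simp
  qed
  then have "(\<Prod>i'\<in>I - {i}. \<Prod>j\<in>{j\<in>I. i' < j}. pair_factor Q (z i') (z j)) =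
      ordered_pair_prod Q (I - {i}) z"
    unfolding ordered_pair_prod_def by (rule prod.cong[OF refl])
  then show ?thesis
    unfolding ordered_pair_prod_def[of Q I] prod.remove[OF assms(1,2)] later by simp
qed

lemma ordered_pair_prod_atLeastAtMost:
  fixes m n :: nat
  shows "ordered_pair_prod Q {m..n} z = (\<Prod>i = m..n. \<Prod>j = i + 1..n. pair_factor Q (z i) (z j))"
proof -
  have "{j \<in> {m..n}. i < j} = {i + 1..n}" if "i \<in> {m..n}" for i
    using that by auto
  then show ?thesis unfolding ordered_pair_prod_def by (intro prod.cong refl) simp
qed

definition signed_vars :: "'a::field \<Rightarrow> ('i \<Rightarrow> 'a) \<Rightarrow> ('i \<Rightarrow> 'i) \<Rightarrow> ('i \<Rightarrow> bool) \<Rightarrow> 'i \<Rightarrow> 'a" where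
  "signed_vars Q w p s i = signed_point Q (s i) (w (p i))"

definition symmetrized_pair_prod :: "'a::field \<Rightarrow> ('i::linorder \<Rightarrow> 'a) \<Rightarrow> 'i set \<Rightarrow> 'i set \<Rightarrow> 'a" where
  "symmetrized_pair_prod Q w I M =
     (\<Sum>(p, s)\<in>signed_bijs I M. ordered_pair_prod Q I (signed_vars Q w p s))"

lemma prod_pair_factor_signed_vars:
  assumes "admissible Q w M" "k \<in> M" "bij_betw p J (M - {k})"
  shows "(\<Prod>j\<in>J. pair_factor Q (signed_point Q e (w k)) (signed_vars Q w p s j)) =
    (\<Prod>m\<in>M - {k}. pair_factor Q (signed_point Q e (w k)) (w m))"
proof -
  have "pair_factor Q (signed_point Q e (w k)) (signed_vars Q w p s j) =
      pair_factor Q (signed_point Q e (w k)) (w (p j))" if "j \<in> J" for j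
  proof -
    have m: "p j \<in> M" "p j \<noteq> k" using bij_betw_apply[OF assms(3) that] by auto
    have "Q \<noteq> 0" "w (p j) \<noteq> 0" using assms(1) m(1) by (simp_all add: admissible_def)
    moreover have "signed_point Q e (w k) \<noteq> w (p j)" "Q * signed_point Q e (w k) * w (p j) \<noteq> 1"
      using admissible_signed_points_distinct[OF assms(1,2) m(1) m(2)[symmetric], of e False]
      by (simp_all add: signed_point_def)
    ultimately show ?thesis unfolding signed_vars_def signed_point_def[of Q "s j"]
      by (simp add: pair_factor_dual)
  qed
  then have "(\<Prod>j\<in>J. pair_factor Q (signed_point Q e (w k)) (signed_vars Q w p s j)) =
      (\<Prod>j\<in>J. pair_factor Q (signed_point Q e (w k)) (w (p j)))"
    by (rule prod.cong[OF refl])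
  also have "\<dots> = (\<Prod>m\<in>M - {k}. pair_factor Q (signed_point Q e (w k)) (w m))"
    by (rule prod.reindex_bij_betw[OF assms(3)])
  finally show ?thesis .
qed

lemma ordered_pair_prod_signed_vars_extend:
  assumes "finite I" "i \<in> I" "\<And>j. j \<in> I \<Longrightarrow> i \<le> j" "admissible Q w M" "k \<in> M"
    and "(p, s) \<in> signed_bijs (I - {i}) (M - {k})"
  shows "ordered_pair_prod Q I (signed_vars Q w (p(i := k)) (s(i := e))) =
    (\<Prod>m\<in>M - {k}. pair_factor Q (signed_point Q e (w k)) (w m)) *
    ordered_pair_prod Q (I - {i}) (signed_vars Q w p s)"
proof -
  define pt where "pt = signed_point Q e (w k)"
  have bij: "bij_betw p (I - {i}) (M - {k})" using assms(6) by (simp add: signed_bijs_def)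
  have same: "signed_vars Q w (p(i := k)) (s(i := e)) j = signed_vars Q w p s j" if "j \<in> I - {i}" for j
    using that by (simp add: signed_vars_def)
  have first: "signed_vars Q w (p(i := k)) (s(i := e)) i = pt"
    by (simp add: signed_vars_def pt_def)
  have "ordered_pair_prod Q I (signed_vars Q w (p(i := k)) (s(i := e))) =
      (\<Prod>j\<in>I - {i}. pair_factor Q (signed_vars Q w (p(i := k)) (s(i := e)) i)
         (signed_vars Q w (p(i := k)) (s(i := e)) j)) *
      ordered_pair_prod Q (I - {i}) (signed_vars Q w (p(i := k)) (s(i := e)))"
    by (rule ordered_pair_prod_remove_min[OF assms(1-3)])
  also have "\<dots> = (\<Prod>j\<in>I - {i}. pair_factor Q pt (signed_vars Q w p s j)) *
      ordered_pair_prod Q (I - {i}) (signed_vars Q w p s)"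
  proof -
    have "ordered_pair_prod Q (I - {i}) (signed_vars Q w (p(i := k)) (s(i := e))) =
        ordered_pair_prod Q (I - {i}) (signed_vars Q w p s)"
      by (rule ordered_pair_prod_cong) (rule same)
    moreover have "(\<Prod>j\<in>I - {i}. pair_factor Q (signed_vars Q w (p(i := k)) (s(i := e)) i)
         (signed_vars Q w (p(i := k)) (s(i := e)) j)) =
        (\<Prod>j\<in>I - {i}. pair_factor Q pt (signed_vars Q w p s j))"
      using same by (intro prod.cong refl) (simp add: first)
    ultimately show ?thesis by simp
  qed
  also have "\<dots> = (\<Prod>m\<in>M - {k}. pair_factor Q pt (w m)) * ordered_pair_prod Q (I - {i}) (signed_vars Q w p s)"
    unfolding pt_def prod_pair_factor_signed_vars[OF assms(4,5) bij] ..
  finally show ?thesis unfolding pt_def .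
qed

lemma sum_signed_bijs_first_variable:
  assumes "finite I" "finite M" "i \<in> I" "\<And>j. j \<in> I \<Longrightarrow> i \<le> j" "admissible Q w M"
    and "\<And>k. k \<in> M \<Longrightarrow> symmetrized_pair_prod Q w (I - {i}) (M - {k}) = c"
  shows "(\<Sum>(p, s)\<in>signed_bijs I M. H (signed_vars Q w p s i) * ordered_pair_prod Q I (signed_vars Q w p s)) =
    c * pole_sum Q w M H"
proof -
  have "(\<Sum>(p, s)\<in>signed_bijs (I - {i}) (M - {k}).
        H (signed_vars Q w (p(i := k)) (s(i := e)) i) *
        ordered_pair_prod Q I (signed_vars Q w (p(i := k)) (s(i := e)))) =
      c * (H (signed_point Q e (w k)) * (\<Prod>m\<in>M - {k}. pair_factor Q (signed_point Q e (w k)) (w m)))"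
    if k: "k \<in> M" for k e
  proof -
    have "(\<Sum>(p, s)\<in>signed_bijs (I - {i}) (M - {k}).
        H (signed_vars Q w (p(i := k)) (s(i := e)) i) *
        ordered_pair_prod Q I (signed_vars Q w (p(i := k)) (s(i := e)))) =
      (\<Sum>(p, s)\<in>signed_bijs (I - {i}) (M - {k}). H (signed_point Q e (w k)) *
        ((\<Prod>m\<in>M - {k}. pair_factor Q (signed_point Q e (w k)) (w m)) *
         ordered_pair_prod Q (I - {i}) (signed_vars Q w p s)))"
      using ordered_pair_prod_signed_vars_extend[OF assms(1,3,4,5) k]
      by (intro sum.cong refl) (auto simp: signed_vars_def)
    also have "\<dots> = H (signed_point Q e (w k)) * (\<Prod>m\<in>M - {k}. pair_factor Q (signed_point Q e (w k)) (w m)) *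
        symmetrized_pair_prod Q w (I - {i}) (M - {k})"
      unfolding symmetrized_pair_prod_def sum_distrib_left by (simp add: case_prod_beta mult.assoc)
    finally show ?thesis using assms(6)[OF k] by (simp add: mult.commute)
  qed
  then show ?thesis
    unfolding sum_signed_bijs_remove[OF assms(1-3)] pole_sum_def sum_distrib_left
    by (intro sum.cong refl) simp
qed

section \<open>The symmetrization of the constant function\<close>

lemma V_const_Suc:
  "V_const q (Suc n) = V_const q n * (q ^ n * (1 - q)) / ((1 - q ^ Suc n) * (1 + q ^ n))"
proof -
  have "Suc n choose 2 = n + (n choose 2)"
    using binomial_Suc_Suc[of n 1] by (simp add: numeral_2_eq_2)
  then show ?thesis unfolding V_const_def by (simp add: power_add mult_ac)
qed

lemma V_const_nonzero:
  assumes "q > 0" "q \<noteq> 1"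
  shows "V_const q n \<noteq> 0"
proof -
  have "1 - q ^ i \<noteq> 0" if "i \<ge> 1" for i
    using assms that power_eq_1_iff[of q i] by auto
  moreover have "1 + q ^ i \<noteq> 0" for i
    using assms by (metis add_pos_pos zero_less_one zero_less_power less_irrefl)
  ultimately show ?thesis using assms unfolding V_const_def by auto
qed

lemma symmetrized_pair_prod_eq:
  fixes q :: real
  assumes "q > 0" "q \<noteq> 1"
  shows "finite I \<Longrightarrow> finite M \<Longrightarrow> card I = card M \<Longrightarrow> admissible (complex_of_real q) w M \<Longrightarrow>
    symmetrized_pair_prod (complex_of_real q) w I M = 1 / complex_of_real (V_const q (card M))"
proof (induction "card M" arbitrary: I M)
  case 0
  then have "I = {}" "M = {}" by auto
  then show ?case
    by (simp add: symmetrized_pair_prod_def signed_bijs_empty ordered_pair_prod_def V_const_def numeral_2_eq_2)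
next
  case (Suc n)
  define i where "i = Min I"
  have "I \<noteq> {}" using Suc.hyps(2) Suc.prems(3) by auto
  then have i: "i \<in> I" "\<And>j. j \<in> I \<Longrightarrow> i \<le> j" unfolding i_def using Suc.prems(1) by auto
  have "symmetrized_pair_prod (complex_of_real q) w (I - {i}) (M - {k}) = 1 / complex_of_real (V_const q n)"
    if "k \<in> M" for k
  proof -
    have card: "card (M - {k}) = n" "card (I - {i}) = n"
      using Suc.hyps(2) Suc.prems(1-3) that i(1) by auto
    have "symmetrized_pair_prod (complex_of_real q) w (I - {i}) (M - {k}) =
        1 / complex_of_real (V_const q (card (M - {k})))"
      by (rule Suc.hyps(1)) (use card Suc.prems admissible_subset[OF Suc.prems(4) Diff_subset] in auto)
    then show ?thesis unfolding card .
  qed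
  then have "symmetrized_pair_prod (complex_of_real q) w I M =
      1 / complex_of_real (V_const q n) * pole_sum (complex_of_real q) w M (\<lambda>_. 1)"
    using sum_signed_bijs_first_variable[OF Suc.prems(1,2) i Suc.prems(4), of _ "\<lambda>_. 1"]
    by (simp add: symmetrized_pair_prod_def)
  also have "\<dots> = 1 / complex_of_real (V_const q n) *
      ((1 - complex_of_real q ^ Suc n) * (1 + complex_of_real q ^ n) / (complex_of_real q ^ n * (1 - complex_of_real q)))"
    using pole_sum_one[OF Suc.prems(2,4) _ Suc.hyps(2)[symmetric]] assms by simp
  also have "\<dots> = 1 / complex_of_real (V_const q (card M))"
    unfolding Suc.hyps(2)[symmetric] V_const_Suc by simp
  finally show ?case .
qed

lemma F_summand_signed_var:
  "F_summand q \<alpha> N (signed_var q w p s) =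
     phi1 q \<alpha> (signed_vars (complex_of_real q) w p s 1) *
     ordered_pair_prod (complex_of_real q) {1..N} (signed_vars (complex_of_real q) w p s)"
proof -
  have "signed_var q w p s = signed_vars (complex_of_real q) w p s"
    by (simp add: fun_eq_iff signed_var_def signed_vars_def signed_point_def)
  then show ?thesis
    unfolding F_summand_def ordered_pair_prod_atLeastAtMost pair_factor_def by (simp only: mult.commute)
qed

lemma pole_sum_phi1:
  assumes "finite K" "admissible (complex_of_real q) w K"
  shows "pole_sum (complex_of_real q) w K (phi1 q \<alpha>) =
    (\<Sum>k\<in>K. (1 - complex_of_real q)\<^sup>2 * w k / ((1 - w k) * (1 - complex_of_real q * w k)))"
  unfolding phi1_def by (rule pole_sum_phi[OF assms])

theorem lemma6p5:
  fixes q \<alpha> :: real and N :: nat and w :: "nat \<Rightarrow> complex"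
  assumes "q > 0" and "q \<noteq> 1" and "\<alpha> \<ge> 0" and "N > 0"
    and "\<And>k. k \<in> {1..N} \<Longrightarrow> w k \<noteq> 0 \<and> w k \<noteq> 1 \<and> of_real q * w k \<noteq> 1
                              \<and> of_real q * (w k)^2 \<noteq> 1"
    and "\<And>i j. i \<in> {1..N} \<Longrightarrow> j \<in> {1..N} \<Longrightarrow> i \<noteq> j \<Longrightarrow>
                 w i \<noteq> w j \<and> of_real q * w i * w j \<noteq> 1"
  shows "F1 q \<alpha> N w = of_real (\<alpha> ^ (N - 1)) *
           (\<Sum>k = 1..N. (1 - of_real q)^2 * w k / ((1 - w k) * (1 - of_real q * w k)))"
proof -
  define Q where "Q = complex_of_real q"
  define V where "V = complex_of_real (V_const q (N - 1))"
  have adm: "admissible Q w {1..N}"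
    using assms(1,5,6) unfolding admissible_def Q_def by auto
  have "symmetrized_pair_prod Q w ({1..N} - {1}) ({1..N} - {k}) = 1 / V" if "k \<in> {1..N}" for k
    using symmetrized_pair_prod_eq[OF assms(1,2), of "{1..N} - {1}" "{1..N} - {k}" w] that assms(4)
      admissible_subset[OF adm]
    by (auto simp: Q_def V_def)
  then have "(\<Sum>(p, s)\<in>signed_perms N. F_summand q \<alpha> N (signed_var q w p s)) =
      1 / V * pole_sum Q w {1..N} (phi1 q \<alpha>)"
    unfolding signed_perms_eq_signed_bijs F_summand_signed_var Q_def[symmetric]
    by (intro sum_signed_bijs_first_variable adm) (use assms(4) in auto)
  then show ?thesis
    using V_const_nonzero[OF assms(1,2)] pole_sum_phi1[OF _ adm[unfolded Q_def], of \<alpha>]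
    unfolding F1_def by (simp add: Q_def V_def)
qed

end
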